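(* Let $q$ be a prime power, $k\geq 1$, and let $f,f'$ be linear Latin hypercubes of order $q$ and dimension $k$. Suppose there is a function $R:\mathbb{F}_q^3\to\mathbb{F}_q$ such that for every rectangle $(a,b,c,d)$ both $f(a)=R(f(b),f(c),f(d))$ and $f'(a)=R(f'(b),f'(c),f'(d))$ hold, and suppose $f(x)=f'(x)$ for every $x=(x_1,\dots,x_k)\in\mathbb{F}_q^k$ having at most one nonzero coordinate. Then $f=f'$. (That is, a linear Latin hypercube is uniquely determined by its rectangle function and its values at the points with at most one nonzero coordinate.)
   Context: A Latin hypercube of order $q$ and dimension $k$ is a function $f:\mathbb{F}_q^k\to\mathbb{F}_q$ such that fixing any $k-1$ arguments gives a bijection in the remaining argument. It is linear if there are permutations $\alpha_0,\dots,\alpha_k$ of $\mathbb{F}_q$ with $\alpha_0(f(x_1,\dots,x_k))=\alpha_1(x_1)+\cdots+\alpha_k(x_k)$ for all $x$. For distinct $i,j$, a rectangle of directions $i$ and $j$ is a quadruple $(a,b,c,d)$ in $\mathbb{F}_q^k$ with $a_i=b_i$, $c_i=d_i$, $b_j=c_j$, $d_j=a_j$, and $a_l=b_l=c_l=d_l$ for $l\notin\{i,j\}$. For a linear Latin hypercube $f$ (with $k\ge 2$), the rectangle function $\mathrm{Rect}_f$ is the unique $R$ with $f(a)=R(f(b),f(c),f(d))$ for all rectangles. *)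

theory Defs
  imports Main
begin

text \<open>The finite field F_q is a type 'a of class finite field (its order is automatically
a prime power); coordinates are indexed by a finite type 'n with k = CARD('n) \<ge> 1.
Points of F_q^k are functions 'n \<Rightarrow> 'a.\<close>

definition latin_hypercube :: "(('n::finite \<Rightarrow> 'a::{finite,field}) \<Rightarrow> 'a) \<Rightarrow> bool" where
  "latin_hypercube f \<longleftrightarrow> (\<forall>i x. bij (\<lambda>t. f (x(i := t))))"

definition linear_latin_hypercube :: "(('n::finite \<Rightarrow> 'a::{finite,field}) \<Rightarrow> 'a) \<Rightarrow> bool" where
  "linear_latin_hypercube f \<longleftrightarrow> latin_hypercube f \<and>
     (\<exists>(\<alpha>0::'a \<Rightarrow> 'a) (\<alpha>::'n \<Rightarrow> 'a \<Rightarrow> 'a). bij \<alpha>0 \<and> (\<forall>i. bij (\<alpha> i)) \<and>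
        (\<forall>x. \<alpha>0 (f x) = (\<Sum>i\<in>UNIV. \<alpha> i (x i))))"

definition is_rectangle :: "'n \<Rightarrow> 'n \<Rightarrow> ('n \<Rightarrow> 'a) \<Rightarrow> ('n \<Rightarrow> 'a) \<Rightarrow> ('n \<Rightarrow> 'a) \<Rightarrow> ('n \<Rightarrow> 'a) \<Rightarrow> bool" where
  "is_rectangle i j a b c d \<longleftrightarrow> i \<noteq> j \<and>
     a i = b i \<and> c i = d i \<and> b j = c j \<and> d j = a j \<and>
     (\<forall>l. l \<noteq> i \<and> l \<noteq> j \<longrightarrow> a l = b l \<and> b l = c l \<and> c l = d l)"

end

theory Submission
  imports Defs
begin

text \<open>Induction on the number of nonzero coordinates: if x has two nonzero coordinates
i and j, then x is the corner of the rectangle whose other three corners are obtained by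
zeroing x at j, at both i and j, and at i. These have smaller support, so f and f' agree
there by induction, and the common rectangle function transfers the agreement to x.\<close>

lemma is_rectangle_zeroing:
  fixes x :: "'n \<Rightarrow> 'a::zero"
  assumes "i \<noteq> j"
  shows "is_rectangle i j x (x(j := 0)) (x(i := 0, j := 0)) (x(i := 0))"
  using assms unfolding is_rectangle_def by auto

lemma card_support_upd_zero_less:
  fixes x :: "'n::finite \<Rightarrow> 'a::zero"
  assumes "x i \<noteq> 0"
  shows "card {l. (x(i := 0)) l \<noteq> 0} < card {l. x l \<noteq> 0}"
proof -
  have "{l. (x(i := 0)) l \<noteq> 0} = {l. x l \<noteq> 0} - {i}" by auto
  also have "card \<dots> < card {l. x l \<noteq> 0}"
    using assms by (intro card_Diff1_less) auto
  finally show ?thesis .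
qed

lemma card_support_upd_zero_le:
  fixes x :: "'n::finite \<Rightarrow> 'a::zero"
  shows "card {l. (x(i := 0)) l \<noteq> 0} \<le> card {l. x l \<noteq> 0}"
  by (rule card_mono) auto

lemma two_in_support:
  fixes x :: "'n::finite \<Rightarrow> 'a::zero"
  assumes "\<not> card {l. x l \<noteq> 0} \<le> 1"
  obtains i j where "i \<noteq> j" "x i \<noteq> 0" "x j \<noteq> 0"
proof -
  have "\<not> (\<forall>i\<in>{l. x l \<noteq> 0}. \<forall>j\<in>{l. x l \<noteq> 0}. i = j)"
    using assms card_le_Suc0_iff_eq[of "{l. x l \<noteq> 0}"] by simp
  then show ?thesis using that by blast
qed

lemma eq_of_rectangle_rule:
  fixes f g :: "('n::finite \<Rightarrow> 'a::zero) \<Rightarrow> 'b"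
  assumes rect_f: "\<And>i j a b c d. is_rectangle i j a b c d \<Longrightarrow> f a = R (f b) (f c) (f d)"
    and rect_g: "\<And>i j a b c d. is_rectangle i j a b c d \<Longrightarrow> g a = R (g b) (g c) (g d)"
    and small: "\<And>x. card {i. x i \<noteq> 0} \<le> 1 \<Longrightarrow> f x = g x"
  shows "f = g"
proof
  fix x
  show "f x = g x"
  proof (induction x rule: measure_induct_rule[where f = "\<lambda>x. card {i. x i \<noteq> 0}"])
    case (less x)
    show ?case
    proof (cases "card {i. x i \<noteq> 0} \<le> 1")
      case True
      then show ?thesis by (rule small)
    next
      case False
      then obtain i j where ij: "i \<noteq> j" "x i \<noteq> 0" "x j \<noteq> 0"
        by (rule two_in_support)
      have b: "f (x(j := 0)) = g (x(j := 0))"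
        using ij by (intro less card_support_upd_zero_less)
      have d: "f (x(i := 0)) = g (x(i := 0))"
        using ij by (intro less card_support_upd_zero_less)
      have "card {l. (x(i := 0, j := 0)) l \<noteq> 0} < card {l. x l \<noteq> 0}"
        using ij(2) by (rule le_less_trans[OF card_support_upd_zero_le card_support_upd_zero_less])
      then have c: "f (x(i := 0, j := 0)) = g (x(i := 0, j := 0))"
        by (rule less)
      have "f x = R (f (x(j := 0))) (f (x(i := 0, j := 0))) (f (x(i := 0)))"
        by (rule rect_f[OF is_rectangle_zeroing[OF ij(1)]])
      also have "\<dots> = R (g (x(j := 0))) (g (x(i := 0, j := 0))) (g (x(i := 0)))"
        by (simp only: b c d)
      also have "\<dots> = g x"
        by (rule rect_g[OF is_rectangle_zeroing[OF ij(1)], symmetric])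
      finally show ?thesis .
    qed
  qed
qed

theorem lemma2:
  fixes f f' :: "('n::finite \<Rightarrow> 'a::{finite,field}) \<Rightarrow> 'a"
    and R :: "'a \<Rightarrow> 'a \<Rightarrow> 'a \<Rightarrow> 'a"
  assumes "linear_latin_hypercube f" and "linear_latin_hypercube f'"
    and "\<And>i j a b c d. is_rectangle i j a b c d \<Longrightarrow> f a = R (f b) (f c) (f d)"
    and "\<And>i j a b c d. is_rectangle i j a b c d \<Longrightarrow> f' a = R (f' b) (f' c) (f' d)"
    and "\<And>x. card {i. x i \<noteq> 0} \<le> 1 \<Longrightarrow> f x = f' x"
  shows "f = f'"
  using assms(3-5) by (rule eq_of_rectangle_rule)

end
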